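(* For the hypergeometric weights described in the context, the recursion and Laguerre--Freud matrices satisfy \[ \vartheta\Psi=[\phi,\Psi]=[-T_{-},\Psi]=[\Psi,T_{-}],\qquad \vartheta\Psi^\top=\Psi^\top+[\mu,\Psi^\top]=\Psi^\top+[-T_{+}^\top,\Psi^\top]. \]
   Context: Weights on $\mathbb N_0$: $w^{(a)}(k)=\frac{(b^{(a)}_1)_k\cdots(b^{(a)}_{M^{(a)}})_k}{(c_1)_k\cdots(c_N)_k}\frac{(\eta^{(a)})^k}{k!}$, $a\in\{1,2\}$ (convergent series); they satisfy $\theta(k+1)w^{(a)}(k+1)=\sigma^{(a)}(k)w^{(a)}(k)$ with $\theta(z)=z(z+c_1-1)\cdots(z+c_N-1)$, $\sigma^{(a)}(z)=\eta^{(a)}(z+b^{(a)}_1)\cdots(z+b^{(a)}_{M^{(a)}})$. Moment matrix (indices from 0): $\mathscr M_{n,2m}=\sum_k k^{n+m}w^{(1)}(k)$, $\mathscr M_{n,2m+1}=\sum_k k^{n+m}w^{(2)}(k)$, with all leading principal minors nonzero, so $\mathscr M=S^{-1}H\tilde S^{-\top}$ ($S,\tilde S$ lower unitriangular, $H$ diagonal), all depending on $(\eta^{(1)},\eta^{(2)})$. $\Lambda$ has ones on the first superdiagonal; $T=S\Lambda S^{-1}=(\Lambda^\top)^2\gamma+\Lambda^\top\beta+\alpha+\Lambda$ with diagonal $\alpha,\beta,\gamma$; $T_-=(\Lambda^\top)^2\gamma+\Lambda^\top\beta$, $T_+=\alpha+\Lambda$. $L$ is the Pascal matrix $L_{n,m}=\binom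 nm$ ($n\ge m$), $\Pi^{-1}=SL^{-1}S^{-1}$, and $\Psi=\Pi^{-1}\theta(T)$. $\vartheta^{(a)}=\eta^{(a)}\partial/\partial\eta^{(a)}$, $\vartheta=\vartheta^{(1)}+\vartheta^{(2)}$; $\phi=(\vartheta S)S^{-1}$; $\tilde\phi^{(a)}=(\vartheta^{(a)}\tilde S)\tilde S^{-1}$; $\mu^{(a)}=(\vartheta^{(a)}H^{-1})H+H^{-1}\tilde\phi^{(a)}H$, $\mu=\mu^{(1)}+\mu^{(2)}$. $[X,Y]=XY-YX$. *)

theory Defs
  imports "HOL-Analysis.Analysis"
begin

type_synonym rmat = "nat \<Rightarrow> nat \<Rightarrow> real"

text \<open>Matrix product; all products occurring in the statement have finitely
  many nonzero terms, in which case the infinite sum is the finite sum.\<close>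
definition mmult :: "rmat \<Rightarrow> rmat \<Rightarrow> rmat" where
  "mmult A B = (\<lambda>i j. infsum (\<lambda>k. A i k * B k j) UNIV)"

definition madd :: "rmat \<Rightarrow> rmat \<Rightarrow> rmat" where
  "madd A B = (\<lambda>i j. A i j + B i j)"

definition mneg :: "rmat \<Rightarrow> rmat" where
  "mneg A = (\<lambda>i j. - A i j)"

definition msub :: "rmat \<Rightarrow> rmat \<Rightarrow> rmat" where
  "msub A B = (\<lambda>i j. A i j - B i j)"

definition mscale :: "real \<Rightarrow> rmat \<Rightarrow> rmat" where
  "mscale c A = (\<lambda>i j. c * A i j)"

definition mtrans :: "rmat \<Rightarrow> rmat" where
  "mtrans A = (\<lambda>i j. A j i)"

definition idm :: rmat where
  "idm = (\<lambda>i j. if i = j then 1 else 0)"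

definition comm :: "rmat \<Rightarrow> rmat \<Rightarrow> rmat" where
  "comm X Y = msub (mmult X Y) (mmult Y X)"

definition lower_tri :: "rmat \<Rightarrow> bool" where
  "lower_tri A \<longleftrightarrow> (\<forall>i j. i < j \<longrightarrow> A i j = 0)"

definition lower_unitri :: "rmat \<Rightarrow> bool" where
  "lower_unitri A \<longleftrightarrow> lower_tri A \<and> (\<forall>i. A i i = 1)"

definition diagonal :: "rmat \<Rightarrow> bool" where
  "diagonal A \<longleftrightarrow> (\<forall>i j. i \<noteq> j \<longrightarrow> A i j = 0)"

definition ltinv :: "rmat \<Rightarrow> rmat" where
  "ltinv A = (THE X. lower_tri X \<and> mmult A X = idm \<and> mmult X A = idm)"

definition Lam :: rmat where
  "Lam = (\<lambda>i j. if j = Suc i then 1 else 0)"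

definition pascal :: rmat where
  "pascal = (\<lambda>n m. real (n choose m))"

definition lead_minor :: "rmat \<Rightarrow> nat \<Rightarrow> real" where
  "lead_minor A n = (\<Sum>p | p permutes {..<n}. of_int (sign p) * (\<Prod>i<n. A i (p i)))"

definition hweight :: "nat \<Rightarrow> (nat \<Rightarrow> real) \<Rightarrow> nat \<Rightarrow> (nat \<Rightarrow> real) \<Rightarrow> real \<Rightarrow> nat \<Rightarrow> real" where
  "hweight M b N c eta k =
     (\<Prod>j<M. pochhammer (b j) k) / (\<Prod>j<N. pochhammer (c j) k) * eta ^ k / fact k"

definition moment :: "(nat \<Rightarrow> real) \<Rightarrow> (nat \<Rightarrow> real) \<Rightarrow> rmat" where
  "moment w1 w2 = (\<lambda>n m. if even m then (\<Sum>k. real k ^ (n + m div 2) * w1 k)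
                                     else (\<Sum>k. real k ^ (n + m div 2) * w2 k))"

fun theta_mat :: "(nat \<Rightarrow> real) \<Rightarrow> nat \<Rightarrow> rmat \<Rightarrow> rmat" where
  "theta_mat c 0 T = T"
| "theta_mat c (Suc n) T = mmult (theta_mat c n T) (madd T (mscale (c n - 1) idm))"

text \<open>Since T = (\<Lambda>^T)^2 \<gamma> + \<Lambda>^T \<beta> + \<alpha> + \<Lambda>, these are
  T_- = (\<Lambda>^T)^2\<gamma> + \<Lambda>^T\<beta> and T_+ = \<alpha> + \<Lambda>.\<close>
definition lowpart :: "rmat \<Rightarrow> rmat" where
  "lowpart T = (\<lambda>i j. if j < i then T i j else 0)"

definition uppart :: "rmat \<Rightarrow> rmat" where
  "uppart T = (\<lambda>i j. if i \<le> j then T i j else 0)"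

definition vth1 :: "(real \<Rightarrow> real \<Rightarrow> rmat) \<Rightarrow> real \<Rightarrow> real \<Rightarrow> rmat" where
  "vth1 F x y = (\<lambda>i j. x * deriv (\<lambda>t. F t y i j) x)"

definition vth2 :: "(real \<Rightarrow> real \<Rightarrow> rmat) \<Rightarrow> real \<Rightarrow> real \<Rightarrow> rmat" where
  "vth2 F x y = (\<lambda>i j. y * deriv (\<lambda>t. F x t i j) y)"

definition vth :: "(real \<Rightarrow> real \<Rightarrow> rmat) \<Rightarrow> real \<Rightarrow> real \<Rightarrow> rmat" where
  "vth F x y = madd (vth1 F x y) (vth2 F x y)"

definition Tmat :: "rmat \<Rightarrow> rmat" where
  "Tmat S = mmult (mmult S Lam) (ltinv S)"

text \<open>\<Psi> = \<Pi>^{-1} \<theta>(T), with \<Pi>^{-1} = S L^{-1} S^{-1}.\<close>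
definition Psi :: "(nat \<Rightarrow> real) \<Rightarrow> nat \<Rightarrow> rmat \<Rightarrow> rmat" where
  "Psi c N S = mmult (mmult (mmult S (ltinv pascal)) (ltinv S)) (theta_mat c N (Tmat S))"

end

theory Submission
  imports Defs "Jordan_Normal_Form.Determinant"
begin

text \<open>
  Everything is conjugated by \<open>S\<close>: \<open>T = S \<Lambda> S\<^sup>-\<^sup>1\<close> and \<open>\<Psi> = S K S\<^sup>-\<^sup>1\<close> with the constant
  matrix \<open>K = L\<^sup>-\<^sup>1 \<theta>(\<Lambda>)\<close>. Hence \<open>vth \<Psi> = [\<phi>, \<Psi>]\<close>, and \<open>\<Lambda> L = L (\<Lambda> + I)\<close> gives
  \<open>[K, \<Lambda>] = K\<close>, i.e. \<open>[\<Psi>, T] = \<Psi>\<close>.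
  The Euler operator acts on the moments as \<open>vth \<M> = \<Lambda> \<M>\<close>, so differentiating the
  Gauss--Borel factorization \<open>H = S \<M> St\<^sup>T\<close> gives \<open>vth H = \<phi> H + T H + H \<phi>t\<^sup>T\<close>, where
  \<open>\<phi>\<close> and \<open>\<phi>t = (vth St) St\<^sup>-\<^sup>1\<close> are strictly lower triangular and \<open>vth H\<close> is diagonal.
  Comparing strictly lower, diagonal and strictly upper parts yields \<open>\<phi> = -T\<^sub>-\<close> and
  \<open>\<mu> = -T\<^sub>+\<^sup>T\<close>; transposing \<open>[\<Psi>, T\<^sub>-] = \<Psi> - [\<Psi>, T\<^sub>+]\<close> then gives the second identity.
  The factors are differentiable at all because the Doolittle recursion expresses them
  rationally in the moments, all leading minors being nonzero.
\<close>
section \<open>Banded semi-infinite matrices\<close>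

definition upper_band :: "nat \<Rightarrow> rmat \<Rightarrow> bool" where
  "upper_band w A \<longleftrightarrow> (\<forall>i k. i + w < k \<longrightarrow> A i k = 0)"

definition lower_band :: "nat \<Rightarrow> rmat \<Rightarrow> bool" where
  "lower_band w A \<longleftrightarrow> (\<forall>k j. j + w < k \<longrightarrow> A k j = 0)"

definition upper_banded :: "rmat \<Rightarrow> bool" where
  "upper_banded A \<longleftrightarrow> (\<exists>w. upper_band w A)"

definition lower_banded :: "rmat \<Rightarrow> bool" where
  "lower_banded A \<longleftrightarrow> (\<exists>w. lower_band w A)"

lemma mmult_eq_sum:
  assumes "finite F" "\<And>k. k \<notin> F \<Longrightarrow> A i k * B k j = 0"
  shows "mmult A B i j = (\<Sum>k\<in>F. A i k * B k j)"
proof -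
  have "mmult A B i j = infsum (\<lambda>k. A i k * B k j) F"
    unfolding mmult_def by (rule infsum_cong_neutral) (use assms in auto)
  then show ?thesis
    using assms by simp
qed

lemma mmult_eq_sum_upper_band:
  "upper_band w A \<Longrightarrow> i + w \<le> n \<Longrightarrow> mmult A B i j = (\<Sum>k\<le>n. A i k * B k j)"
  by (rule mmult_eq_sum) (auto simp: upper_band_def)

lemma mmult_eq_sum_lower_band:
  "lower_band w B \<Longrightarrow> j + w \<le> n \<Longrightarrow> mmult A B i j = (\<Sum>k\<le>n. A i k * B k j)"
  by (rule mmult_eq_sum) (auto simp: lower_band_def)

lemma upper_band_mono: "upper_band a A \<Longrightarrow> a \<le> b \<Longrightarrow> upper_band b A"
  unfolding upper_band_def by auto

lemma mtrans_mmult: "mtrans (mmult A B) = mmult (mtrans B) (mtrans A)"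
  unfolding mtrans_def mmult_def by (simp add: mult.commute)

lemma mtrans_mtrans [simp]: "mtrans (mtrans A) = A"
  unfolding mtrans_def by simp

lemma upper_band_mtrans [simp]: "upper_band w (mtrans A) \<longleftrightarrow> lower_band w A"
  unfolding upper_band_def lower_band_def mtrans_def by auto

lemma lower_band_mtrans [simp]: "lower_band w (mtrans A) \<longleftrightarrow> upper_band w A"
  unfolding upper_band_def lower_band_def mtrans_def by auto

lemma upper_banded_mtrans [simp]: "upper_banded (mtrans A) \<longleftrightarrow> lower_banded A"
  unfolding upper_banded_def lower_banded_def by simp

lemma lower_banded_mtrans [simp]: "lower_banded (mtrans A) \<longleftrightarrow> upper_banded A"
  unfolding upper_banded_def lower_banded_def by simp

lemma upper_band_mmult:
  assumes "upper_band a A" "upper_band b B"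
  shows "upper_band (a + b) (mmult A B)"
  unfolding upper_band_def
proof (intro allI impI)
  fix i k
  assume "i + (a + b) < k"
  then show "mmult A B i k = 0"
    using assms by (subst mmult_eq_sum_upper_band[of a A i "i + a"])
      (auto simp: upper_band_def intro!: sum.neutral)
qed

lemma lower_band_mmult:
  assumes "lower_band a A" "lower_band b B"
  shows "lower_band (a + b) (mmult A B)"
  using upper_band_mmult[of b "mtrans B" a "mtrans A"] assms
  by (simp add: mtrans_mmult[symmetric] add.commute)

lemma upper_banded_mmult [simp, intro]: "upper_banded A \<Longrightarrow> upper_banded B \<Longrightarrow> upper_banded (mmult A B)"
  unfolding upper_banded_def using upper_band_mmult by blast

lemma lower_banded_mmult [simp, intro]: "lower_banded A \<Longrightarrow> lower_banded B \<Longrightarrow> lower_banded (mmult A B)"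
  unfolding lower_banded_def using lower_band_mmult by blast

lemma upper_banded_madd [simp, intro]:
  assumes "upper_banded A" "upper_banded B"
  shows "upper_banded (madd A B)"
proof -
  obtain a b where "upper_band a A" "upper_band b B"
    using assms upper_banded_def by blast
  then have "upper_band (max a b) (madd A B)"
    unfolding upper_band_def madd_def by simp
  then show ?thesis
    unfolding upper_banded_def by blast
qed

lemma upper_banded_lower_tri [simp, intro]: "lower_tri A \<Longrightarrow> upper_banded A"
  unfolding upper_banded_def upper_band_def lower_tri_def by (rule exI[of _ 0]) auto

lemma upper_banded_lower_unitri [simp, intro]: "lower_unitri A \<Longrightarrow> upper_banded A"
  unfolding lower_unitri_def by auto

lemma upper_banded_diagonal [simp, intro]: "diagonal A \<Longrightarrow> upper_banded A"
  unfolding upper_banded_def upper_band_def diagonal_def by (rule exI[of _ 0]) auto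

lemma lower_banded_diagonal [simp, intro]: "diagonal A \<Longrightarrow> lower_banded A"
  unfolding lower_banded_def lower_band_def diagonal_def by (rule exI[of _ 0]) auto

lemma upper_banded_Lam [simp, intro]: "upper_banded Lam"
  unfolding upper_banded_def upper_band_def Lam_def by (rule exI[of _ 1]) auto

lemma upper_banded_idm [simp, intro]: "upper_banded idm"
  unfolding upper_banded_def upper_band_def idm_def by (rule exI[of _ 0]) auto

lemma upper_banded_mscale [simp, intro]: "upper_banded A \<Longrightarrow> upper_banded (mscale c A)"
  unfolding upper_banded_def upper_band_def mscale_def by auto

lemma sum_mult_sum_swap:
  "(\<Sum>l\<in>L. (\<Sum>k\<in>K. a k * b k l) * (c l :: real)) = (\<Sum>k\<in>K. a k * (\<Sum>l\<in>L. b k l * c l))"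
  by (simp add: sum_distrib_left sum_distrib_right mult.assoc sum.swap[of _ L])

lemma mmult_assoc:
  assumes "upper_banded A" "upper_banded B"
  shows "mmult (mmult A B) C = mmult A (mmult B C)"
proof (intro ext)
  fix i j
  obtain a b where a: "upper_band a A" and b: "upper_band b B"
    using assms upper_banded_def by blast
  have "mmult (mmult A B) C i j = (\<Sum>l\<le>i+a+b. mmult A B i l * C l j)"
    using upper_band_mmult[OF a b] by (rule mmult_eq_sum_upper_band) simp
  also have "\<dots> = (\<Sum>l\<le>i+a+b. (\<Sum>k\<le>i+a. A i k * B k l) * C l j)"
    using a by (intro sum.cong refl, subst mmult_eq_sum_upper_band) auto
  also have "\<dots> = (\<Sum>k\<le>i+a. A i k * (\<Sum>l\<le>i+a+b. B k l * C l j))"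
    by (rule sum_mult_sum_swap)
  also have "\<dots> = (\<Sum>k\<le>i+a. A i k * mmult B C k j)"
    by (intro sum.cong refl) (simp add: mmult_eq_sum_upper_band[OF b, of _ "i+a+b"])
  also have "\<dots> = mmult A (mmult B C) i j"
    using a by (rule mmult_eq_sum_upper_band[symmetric]) simp
  finally show "mmult (mmult A B) C i j = mmult A (mmult B C) i j" .
qed

lemma mmult_assoc_lower_banded:
  assumes "lower_banded B" "lower_banded C"
  shows "mmult (mmult A B) C = mmult A (mmult B C)"
proof -
  have "mmult (mmult (mtrans C) (mtrans B)) (mtrans A) = mmult (mtrans C) (mmult (mtrans B) (mtrans A))"
    using assms by (intro mmult_assoc) auto
  then show ?thesis
    by (metis mtrans_mmult mtrans_mtrans)
qed

lemma mmult_assoc_upper_lower: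
  assumes "upper_banded A" "lower_banded C"
  shows "mmult (mmult A B) C = mmult A (mmult B C)"
proof (intro ext)
  fix i j
  obtain a b where a: "upper_band a A" and b: "lower_band b C"
    using assms upper_banded_def lower_banded_def by blast
  have "mmult (mmult A B) C i j = (\<Sum>l\<le>j+b. (\<Sum>k\<le>i+a. A i k * B k l) * C l j)"
    using a b by (simp add: mmult_eq_sum_lower_band[of b C j "j+b"] mmult_eq_sum_upper_band[of a A i "i+a"])
  also have "\<dots> = (\<Sum>k\<le>i+a. A i k * (\<Sum>l\<le>j+b. B k l * C l j))"
    by (rule sum_mult_sum_swap)
  also have "\<dots> = mmult A (mmult B C) i j"
    using a b by (simp add: mmult_eq_sum_lower_band[of b C _ "j+b"] mmult_eq_sum_upper_band[of a A i "i+a"])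
  finally show "mmult (mmult A B) C i j = mmult A (mmult B C) i j" .
qed

lemma mmult_madd_left:
  assumes "upper_banded A" "upper_banded B"
  shows "mmult (madd A B) C = madd (mmult A C) (mmult B C)"
proof (intro ext)
  fix i j
  obtain a b where "upper_band a A" "upper_band b B"
    using assms upper_banded_def by blast
  then have w: "upper_band (max a b) A" "upper_band (max a b) B"
    by (auto elim: upper_band_mono)
  then have "upper_band (max a b) (madd A B)"
    unfolding upper_band_def madd_def by auto
  then show "mmult (madd A B) C i j = madd (mmult A C) (mmult B C) i j"
    using w by (simp add: madd_def mmult_eq_sum_upper_band[of "max a b" _ i "i + max a b"]
        sum.distrib algebra_simps)
qed

lemma mmult_madd_left_lower_banded:
  assumes "lower_banded C"
  shows "mmult (madd A B) C = madd (mmult A C) (mmult B C)"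
proof (intro ext)
  fix i j
  obtain w where "lower_band w C"
    using assms lower_banded_def by blast
  then show "mmult (madd A B) C i j = madd (mmult A C) (mmult B C) i j"
    by (simp add: madd_def mmult_eq_sum_lower_band[of w _ j "j + w"] sum.distrib algebra_simps)
qed

lemma mmult_madd_right:
  assumes "upper_banded A"
  shows "mmult A (madd B C) = madd (mmult A B) (mmult A C)"
proof (intro ext)
  fix i j
  obtain w where "upper_band w A"
    using assms upper_banded_def by blast
  then show "mmult A (madd B C) i j = madd (mmult A B) (mmult A C) i j"
    by (simp add: madd_def mmult_eq_sum_upper_band[of w _ i "i + w"] sum.distrib algebra_simps)
qed

lemma mmult_mscale_left [simp]: "mmult (mscale c A) B = mscale c (mmult A B)"
  unfolding mmult_def mscale_def by (simp add: mult.assoc infsum_cmult_right')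

lemma mmult_mscale_right [simp]: "mmult A (mscale c B) = mscale c (mmult A B)"
  unfolding mmult_def mscale_def by (simp add: mult.left_commute infsum_cmult_right')

lemma mmult_mneg_left: "mmult (mneg A) B = mneg (mmult A B)"
  unfolding mmult_def mneg_def by (simp add: infsum_uminus)

lemma mmult_mneg_right: "mmult A (mneg B) = mneg (mmult A B)"
  unfolding mmult_def mneg_def by (simp add: infsum_uminus)

lemma mmult_idm_left [simp]: "mmult idm A = A"
  by (intro ext, subst mmult_eq_sum[of "{_}"]) (auto simp: idm_def)

lemma mmult_idm_right [simp]: "mmult A idm = A"
  by (intro ext, subst mmult_eq_sum[of "{_}"]) (auto simp: idm_def)

lemma mmult_diagonal_right: "diagonal H \<Longrightarrow> mmult A H i j = A i j * H j j"
  by (subst mmult_eq_sum[of "{j}"]) (auto simp: diagonal_def)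

lemma mmult_diagonal_left: "diagonal H \<Longrightarrow> mmult H A i j = H i i * A i j"
  by (subst mmult_eq_sum[of "{i}"]) (auto simp: diagonal_def)

lemma mtrans_idm [simp]: "mtrans idm = idm"
  unfolding mtrans_def idm_def by (auto intro!: ext)

lemma mtrans_madd: "mtrans (madd A B) = madd (mtrans A) (mtrans B)"
  unfolding mtrans_def madd_def ..

lemma madd_commute: "madd A B = madd B A"
  unfolding madd_def by (simp add: add.commute)

lemma mmult_zero_right [simp]: "mmult A (\<lambda>i j. 0) = (\<lambda>i j. 0)"
  unfolding mmult_def by simp

lemma madd_zero_right [simp]: "madd A (\<lambda>i j. 0) = A"
  unfolding madd_def by simp

lemma mscale_madd: "mscale c (madd A B) = madd (mscale c A) (mscale c B)"
  unfolding mscale_def madd_def by (simp add: algebra_simps)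

lemma mtrans_mscale: "mtrans (mscale c A) = mscale c (mtrans A)"
  unfolding mscale_def mtrans_def ..

definition strictly_lower :: "rmat \<Rightarrow> bool" where
  "strictly_lower A \<longleftrightarrow> (\<forall>i j. i \<le> j \<longrightarrow> A i j = 0)"

lemma upper_banded_strictly_lower [simp, intro]: "strictly_lower A \<Longrightarrow> upper_banded A"
  unfolding strictly_lower_def upper_banded_def upper_band_def by (rule exI[of _ 0]) auto

lemma strictly_lower_mmult:
  assumes P: "strictly_lower P" and Q: "lower_tri Q"
  shows "strictly_lower (mmult P Q)"
  unfolding strictly_lower_def
proof (intro allI impI)
  fix i j :: nat
  assume "i \<le> j"
  then have "P i k * Q k j = 0" for k
    using P Q by (cases "i \<le> k") (auto simp: strictly_lower_def lower_tri_def)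
  then show "mmult P Q i j = 0"
    by (subst mmult_eq_sum[of "{}"]) auto
qed

lemma upper_banded_lowpart [simp]: "upper_banded (lowpart T)"
  unfolding upper_banded_def upper_band_def lowpart_def by (rule exI[of _ 0]) auto

lemma upper_banded_uppart [simp]: "upper_banded T \<Longrightarrow> upper_banded (uppart T)"
  unfolding upper_banded_def upper_band_def uppart_def by auto

lemma comm_mscale_left: "comm (mscale c A) B = mscale c (comm A B)"
  by (simp add: comm_def) (simp add: msub_def mscale_def algebra_simps)

lemma comm_madd_left:
  assumes "upper_banded A" "upper_banded B" "upper_banded X"
  shows "comm (madd A B) X = madd (comm A X) (comm B X)"
  using assms by (simp add: comm_def mmult_madd_left mmult_madd_right)
    (simp add: madd_def msub_def algebra_simps)

lemma comm_madd_right: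
  assumes "upper_banded X" "upper_banded A" "upper_banded B"
  shows "comm X (madd A B) = madd (comm X A) (comm X B)"
  using assms by (simp add: comm_def mmult_madd_left mmult_madd_right)
    (simp add: madd_def msub_def algebra_simps)

lemma comm_mneg_left: "comm (mneg A) B = comm B A"
  by (simp add: comm_def mmult_mneg_left mmult_mneg_right) (simp add: msub_def mneg_def)

lemma mtrans_comm: "mtrans (comm A B) = comm (mtrans B) (mtrans A)"
  unfolding comm_def msub_def mtrans_mmult[symmetric] by (simp add: mtrans_def)

section \<open>Inverses of lower unitriangular matrices\<close>

function inv_rec :: "rmat \<Rightarrow> nat \<Rightarrow> nat \<Rightarrow> real" where
  "inv_rec A i j = (if i < j then 0 else if i = j then 1
      else - (\<Sum>k\<in>{j..<i}. A i k * inv_rec A k j))"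
  by auto
termination by (relation "Wellfounded.measure (\<lambda>(A, i, j). i)") auto

declare inv_rec.simps [simp del]

lemma lower_unitri_inv_rec: "lower_unitri (inv_rec A)"
  unfolding lower_unitri_def lower_tri_def by (auto simp: inv_rec.simps)

lemma mmult_inv_rec:
  assumes A: "lower_unitri A"
  shows "mmult A (inv_rec A) = idm"
proof (intro ext)
  fix i j
  let ?X = "inv_rec A"
  have A0: "\<And>k. i < k \<Longrightarrow> A i k = 0" and A1: "A i i = 1"
    using A unfolding lower_unitri_def lower_tri_def by auto
  have X0: "\<And>k. k < j \<Longrightarrow> ?X k j = 0"
    by (simp add: inv_rec.simps)
  have prod: "mmult A ?X i j = (\<Sum>k\<le>i. A i k * ?X k j)"
    by (rule mmult_eq_sum) (auto simp: A0)
  show "mmult A ?X i j = idm i j"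
  proof (cases "j \<le> i")
    case True
    have "mmult A ?X i j = (\<Sum>k\<in>insert i {j..<i}. A i k * ?X k j)"
      unfolding prod by (rule sum.mono_neutral_right) (auto simp: X0)
    also have "\<dots> = ?X i j + (\<Sum>k\<in>{j..<i}. A i k * ?X k j)"
      by (simp add: A1)
    also have "\<dots> = idm i j"
      using True by (cases "i = j") (simp_all add: idm_def inv_rec.simps[of A i j] inv_rec.simps[of A j j])
    finally show ?thesis .
  next
    case False
    then show ?thesis
      unfolding prod by (auto simp: idm_def X0 intro!: sum.neutral)
  qed
qed

lemma ltinv_unique:
  assumes "lower_tri A" "lower_tri X" "mmult A X = idm" "mmult X A = idm"
  shows "ltinv A = X"
  unfolding ltinv_def
proof (rule the_equality)
  show "lower_tri X \<and> mmult A X = idm \<and> mmult X A = idm"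
    using assms by simp
  fix Y
  assume Y: "lower_tri Y \<and> mmult A Y = idm \<and> mmult Y A = idm"
  have "Y = mmult Y (mmult A X)"
    using assms by simp
  also have "\<dots> = mmult (mmult Y A) X"
    by (rule mmult_assoc[symmetric]) (use assms Y in auto)
  finally show "Y = X"
    using Y by simp
qed

lemma inv_rec_mmult:
  assumes A: "lower_unitri A"
  shows "mmult (inv_rec A) A = idm"
proof -
  let ?X = "inv_rec A"
  have XY: "mmult ?X (inv_rec ?X) = idm"
    by (rule mmult_inv_rec[OF lower_unitri_inv_rec])
  have "A = mmult (mmult A ?X) (inv_rec ?X)"
    by (simp add: mmult_assoc XY A lower_unitri_inv_rec upper_banded_lower_unitri)
  then have "A = inv_rec ?X"
    by (simp add: mmult_inv_rec A)
  then show ?thesis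
    using XY by simp
qed

lemma ltinv_eq_inv_rec: "lower_unitri A \<Longrightarrow> ltinv A = inv_rec A"
  using lower_unitri_inv_rec[of A]
  by (intro ltinv_unique) (auto simp: lower_unitri_def mmult_inv_rec inv_rec_mmult)

lemma lower_unitri_ltinv [simp, intro]: "lower_unitri A \<Longrightarrow> lower_unitri (ltinv A)"
  by (simp add: ltinv_eq_inv_rec lower_unitri_inv_rec)

lemma mmult_ltinv_right [simp]: "lower_unitri A \<Longrightarrow> mmult A (ltinv A) = idm"
  by (simp add: ltinv_eq_inv_rec mmult_inv_rec)

lemma mmult_ltinv_left [simp]: "lower_unitri A \<Longrightarrow> mmult (ltinv A) A = idm"
  by (simp add: ltinv_eq_inv_rec inv_rec_mmult)

lemma mmult_ltinv_cancel_left [simp]: "lower_unitri A \<Longrightarrow> mmult (ltinv A) (mmult A X) = X"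
  by (simp add: mmult_assoc[symmetric])

lemma mmult_ltinv_cancel_right [simp]: "lower_unitri A \<Longrightarrow> mmult A (mmult (ltinv A) X) = X"
  by (simp add: mmult_assoc[symmetric])

lemma ltinv_ltinv [simp]: "lower_unitri A \<Longrightarrow> ltinv (ltinv A) = A"
  using lower_unitri_ltinv[of A] by (intro ltinv_unique) (auto simp: lower_unitri_def)

lemma ltinv_diagonal:
  assumes "diagonal H" "\<And>k. H k k \<noteq> 0"
  shows "ltinv H = (\<lambda>i j. if i = j then inverse (H i i) else 0)"
  by (rule ltinv_unique) (use assms in \<open>auto intro!: ext simp: lower_tri_def diagonal_def idm_def
      mmult_diagonal_left[OF assms(1)] mmult_diagonal_right[OF assms(1)]\<close>)

lemma diagonal_ltinv [simp, intro]: "diagonal H \<Longrightarrow> \<forall>k. H k k \<noteq> 0 \<Longrightarrow> diagonal (ltinv H)"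
  by (simp add: ltinv_diagonal diagonal_def)

section \<open>The Pascal matrix and the matrix \<open>\<Psi>\<close>\<close>

lemma lower_unitri_pascal: "lower_unitri pascal"
  unfolding lower_unitri_def lower_tri_def pascal_def by auto

lemma Lam_mmult: "mmult Lam B i j = B (Suc i) j"
  by (subst mmult_eq_sum[of "{Suc i}"]) (auto simp: Lam_def)

lemma mmult_Lam: "mmult A Lam i j = (if j = 0 then 0 else A i (j - 1))"
  by (subst mmult_eq_sum[of "{j - 1}"]) (auto simp: Lam_def)

lemma Lam_pascal: "mmult Lam pascal = mmult pascal (madd Lam idm)"
proof (intro ext)
  fix n m
  have "mmult pascal (madd Lam idm) n m = mmult pascal Lam n m + mmult pascal idm n m"
    using lower_unitri_pascal by (subst mmult_madd_right) (auto simp: madd_def)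
  also have "\<dots> = real (Suc n choose m)"
    by (cases m) (auto simp: mmult_Lam pascal_def)
  finally show "mmult Lam pascal n m = mmult pascal (madd Lam idm) n m"
    by (simp add: Lam_mmult pascal_def)
qed

lemma ltinv_pascal_Lam: "mmult (ltinv pascal) Lam = mmult (madd Lam idm) (ltinv pascal)"
proof -
  let ?L = pascal and ?Li = "ltinv pascal"
  have "mmult ?Li Lam = mmult (mmult ?Li (mmult Lam ?L)) ?Li"
    using lower_unitri_pascal by (auto simp: mmult_assoc)
  also have "\<dots> = mmult (madd Lam idm) ?Li"
    using lower_unitri_pascal by (auto simp: Lam_pascal mmult_assoc[symmetric])
  finally show ?thesis .
qed

lemma upper_banded_theta_mat [simp, intro]: "upper_banded T \<Longrightarrow> upper_banded (theta_mat c n T)"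
  by (induction n) (auto intro!: upper_banded_madd)

lemma theta_mat_Lam_commute: "mmult (theta_mat c n Lam) Lam = mmult Lam (theta_mat c n Lam)"
proof (induction n)
  case (Suc n)
  let ?t = "theta_mat c n Lam" and ?B = "madd Lam (mscale (c n - 1) idm)"
  have B: "mmult ?B Lam = mmult Lam ?B"
    by (simp add: mmult_madd_left mmult_madd_right)
  have "mmult (theta_mat c (Suc n) Lam) Lam = mmult (mmult ?t Lam) ?B"
    by (simp add: mmult_assoc B)
  also have "\<dots> = mmult Lam (theta_mat c (Suc n) Lam)"
    by (simp add: Suc mmult_assoc)
  finally show ?case .
qed simp

lemma upper_banded_Tmat [simp]: "lower_unitri S \<Longrightarrow> upper_banded (Tmat S)"
  by (simp add: Tmat_def)

lemma theta_mat_Tmat: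
  assumes S: "lower_unitri S"
  shows "theta_mat c n (Tmat S) = mmult (mmult S (theta_mat c n Lam)) (ltinv S)"
proof (induction n)
  case (Suc n)
  let ?B = "madd Lam (mscale (c n - 1) idm)"
  have "madd (Tmat S) (mscale (c n - 1) idm) = mmult (mmult S ?B) (ltinv S)"
    using S by (simp add: Tmat_def mmult_madd_right mmult_madd_left mmult_assoc)
  then show ?case
    using S Suc by (simp add: mmult_assoc)
qed (simp add: Tmat_def)

definition Psi_kernel :: "(nat \<Rightarrow> real) \<Rightarrow> nat \<Rightarrow> rmat" where
  "Psi_kernel c N = mmult (ltinv pascal) (theta_mat c N Lam)"

lemma upper_banded_Psi_kernel [simp, intro]: "upper_banded (Psi_kernel c N)"
  unfolding Psi_kernel_def using lower_unitri_pascal by auto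

lemma Psi_conj:
  assumes S: "lower_unitri S"
  shows "Psi c N S = mmult (mmult S (Psi_kernel c N)) (ltinv S)"
  using S lower_unitri_pascal
  unfolding Psi_def theta_mat_Tmat[OF S] by (simp add: Psi_kernel_def mmult_assoc)

lemma Psi_kernel_Lam: "mmult (Psi_kernel c N) Lam = madd (mmult Lam (Psi_kernel c N)) (Psi_kernel c N)"
proof -
  let ?Li = "ltinv pascal" and ?t = "theta_mat c N Lam"
  have "mmult (Psi_kernel c N) Lam = mmult (mmult ?Li Lam) ?t"
    using lower_unitri_pascal by (auto simp: Psi_kernel_def mmult_assoc theta_mat_Lam_commute)
  also have "\<dots> = madd (mmult Lam (Psi_kernel c N)) (Psi_kernel c N)"
    using lower_unitri_pascal
    by (auto simp: ltinv_pascal_Lam mmult_madd_left Psi_kernel_def mmult_assoc)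
  finally show ?thesis .
qed

lemma comm_Psi_Tmat:
  assumes S: "lower_unitri S"
  shows "comm (Psi c N S) (Tmat S) = Psi c N S"
proof -
  let ?K = "Psi_kernel c N" and ?A = "ltinv S"
  have "mmult (Psi c N S) (Tmat S) = mmult S (mmult (mmult ?K Lam) ?A)"
    using S by (simp add: Psi_conj Tmat_def mmult_assoc)
  also have "\<dots> = madd (mmult (Tmat S) (Psi c N S)) (Psi c N S)"
    using S by (simp add: Psi_kernel_Lam mmult_madd_left mmult_madd_right Psi_conj Tmat_def mmult_assoc)
  finally show ?thesis
    by (auto simp: comm_def msub_def madd_def)
qed

section \<open>Derivatives of matrix-valued functions\<close>

definition mat_deriv :: "(real \<Rightarrow> rmat) \<Rightarrow> real \<Rightarrow> rmat" where
  "mat_deriv F t0 = (\<lambda>i j. deriv (\<lambda>t. F t i j) t0)"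

definition mat_differentiable :: "(real \<Rightarrow> rmat) \<Rightarrow> real \<Rightarrow> bool" where
  "mat_differentiable F t0 \<longleftrightarrow> (\<forall>i j. (\<lambda>t. F t i j) field_differentiable (at t0))"

lemma mat_differentiable_has_derivative:
  "mat_differentiable F t0 \<Longrightarrow> ((\<lambda>t. F t i j) has_field_derivative mat_deriv F t0 i j) (at t0)"
  unfolding mat_differentiable_def mat_deriv_def using DERIV_deriv_iff_field_differentiable by blast

lemma mat_derivI:
  assumes "\<And>i j. ((\<lambda>t. F t i j) has_field_derivative D i j) (at t0)"
  shows "mat_differentiable F t0" "mat_deriv F t0 = D"
  using assms unfolding mat_differentiable_def mat_deriv_def field_differentiable_def
  by (auto intro!: ext DERIV_imp_deriv)

lemma field_differentiable_cong_ev: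
  assumes "\<forall>\<^sub>F t in nhds t0. g t = f t" "f field_differentiable (at t0)"
  shows "g field_differentiable (at t0)"
  using assms DERIV_cong_ev[OF refl assms(1) refl] unfolding field_differentiable_def by blast

lemma mat_deriv_cong_ev: "\<forall>\<^sub>F t in nhds t0. G t = F t \<Longrightarrow> mat_deriv G t0 = mat_deriv F t0"
  unfolding mat_deriv_def by (intro ext deriv_cong_ev) (auto elim: eventually_mono)

lemma mat_differentiable_cong_ev:
  assumes "\<forall>\<^sub>F t in nhds t0. G t = F t" "mat_differentiable F t0"
  shows "mat_differentiable G t0"
  unfolding mat_differentiable_def
proof (intro allI)
  fix i j
  have "\<forall>\<^sub>F t in nhds t0. G t i j = F t i j"
    using assms(1) by (rule eventually_mono) simp
  then show "(\<lambda>t. G t i j) field_differentiable (at t0)"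
    by (rule field_differentiable_cong_ev) (use assms(2) in \<open>simp add: mat_differentiable_def\<close>)
qed

lemma mat_deriv_eq_zero:
  assumes "\<forall>\<^sub>F t in nhds t0. F t i j = c"
  shows "mat_deriv F t0 i j = 0"
  unfolding mat_deriv_def using deriv_cong_ev[OF assms refl] by simp

lemma mat_differentiable_const [simp]: "mat_differentiable (\<lambda>t. A) t0"
  by (rule mat_derivI[of _ "\<lambda>i j. 0"]) simp

lemma mat_deriv_const [simp]: "mat_deriv (\<lambda>t. A) t0 = (\<lambda>i j. 0)"
  by (rule mat_derivI) simp

lemma mat_differentiable_mtrans [simp]:
  "mat_differentiable (\<lambda>t. mtrans (F t)) t0 \<longleftrightarrow> mat_differentiable F t0"
  unfolding mat_differentiable_def mtrans_def by auto

lemma mat_deriv_mtrans: "mat_deriv (\<lambda>t. mtrans (F t)) t0 = mtrans (mat_deriv F t0)"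
  unfolding mat_deriv_def mtrans_def ..

lemma upper_band_mat_deriv:
  "\<forall>\<^sub>F t in nhds t0. upper_band w (A t) \<Longrightarrow> upper_band w (mat_deriv A t0)"
  unfolding upper_band_def by (auto intro!: mat_deriv_eq_zero elim: eventually_mono)

lemma mat_deriv_mmult:
  assumes ev: "\<forall>\<^sub>F t in nhds t0. upper_band w (A t)"
    and dA: "mat_differentiable A t0" and dB: "mat_differentiable B t0"
  shows "mat_differentiable (\<lambda>t. mmult (A t) (B t)) t0"
    "mat_deriv (\<lambda>t. mmult (A t) (B t)) t0
      = madd (mmult (mat_deriv A t0) (B t0)) (mmult (A t0) (mat_deriv B t0))"
proof -
  have A0: "upper_band w (A t0)"
    using ev by (rule eventually_nhds_x_imp_x)
  have A'0: "upper_band w (mat_deriv A t0)"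
    using ev by (rule upper_band_mat_deriv)
  have "((\<lambda>t. mmult (A t) (B t) i j) has_field_derivative
      madd (mmult (mat_deriv A t0) (B t0)) (mmult (A t0) (mat_deriv B t0)) i j) (at t0)" for i j
  proof -
    have e: "\<forall>\<^sub>F t in nhds t0. mmult (A t) (B t) i j = (\<Sum>k\<le>i+w. A t i k * B t k j)"
      using ev by (rule eventually_mono) (rule mmult_eq_sum_upper_band, auto)
    have "((\<lambda>t. \<Sum>k\<le>i+w. A t i k * B t k j) has_field_derivative
       (\<Sum>k\<le>i+w. A t0 i k * mat_deriv B t0 k j + mat_deriv A t0 i k * B t0 k j)) (at t0)"
      by (intro DERIV_sum DERIV_mult' mat_differentiable_has_derivative dA dB)
    then show ?thesis
      using DERIV_cong_ev[OF refl e refl]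
      by (simp add: madd_def mmult_eq_sum_upper_band[OF A0, of i "i+w"]
          mmult_eq_sum_upper_band[OF A'0, of i "i+w"] sum.distrib add.commute)
  qed
  then show "mat_differentiable (\<lambda>t. mmult (A t) (B t)) t0"
    "mat_deriv (\<lambda>t. mmult (A t) (B t)) t0
      = madd (mmult (mat_deriv A t0) (B t0)) (mmult (A t0) (mat_deriv B t0))"
    by (rule mat_derivI)+
qed

lemma mat_deriv_mmult_lower_band:
  assumes ev: "\<forall>\<^sub>F t in nhds t0. lower_band w (B t)"
    and dA: "mat_differentiable A t0" and dB: "mat_differentiable B t0"
  shows "mat_differentiable (\<lambda>t. mmult (A t) (B t)) t0"
    "mat_deriv (\<lambda>t. mmult (A t) (B t)) t0
      = madd (mmult (mat_deriv A t0) (B t0)) (mmult (A t0) (mat_deriv B t0))"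
proof -
  have eq: "(\<lambda>t. mmult (A t) (B t)) = (\<lambda>t. mtrans (mmult (mtrans (B t)) (mtrans (A t))))"
    by (simp add: mtrans_mmult)
  have "\<forall>\<^sub>F t in nhds t0. upper_band w (mtrans (B t))"
    using ev by simp
  note D = mat_deriv_mmult[OF this, of "\<lambda>t. mtrans (A t)"]
  show "mat_differentiable (\<lambda>t. mmult (A t) (B t)) t0"
    unfolding eq using D dA dB by simp
  show "mat_deriv (\<lambda>t. mmult (A t) (B t)) t0
      = madd (mmult (mat_deriv A t0) (B t0)) (mmult (A t0) (mat_deriv B t0))"
    unfolding eq mat_deriv_mtrans using D dA dB
    by (simp add: mat_deriv_mtrans mtrans_madd mtrans_mmult madd_commute)
qed

lemma field_differentiable_inv_rec:
  assumes "\<And>i k. (\<lambda>t. A t i k) field_differentiable (at t0)"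
  shows "(\<lambda>t. inv_rec (A t) i j) field_differentiable (at t0)"
proof (induction i rule: less_induct)
  case (less i)
  show ?case
  proof (cases "j < i")
    case True
    have "(\<lambda>t. - (\<Sum>k\<in>{j..<i}. A t i k * inv_rec (A t) k j)) field_differentiable (at t0)"
      by (intro field_differentiable_minus field_differentiable_sum field_differentiable_mult
          assms less) auto
    then show ?thesis
      using True by (subst inv_rec.simps) simp
  next
    case False
    then show ?thesis
      by (subst inv_rec.simps) (cases "i < j", simp_all)
  qed
qed

lemma mat_deriv_ltinv:
  assumes ev: "\<forall>\<^sub>F t in nhds t0. lower_unitri (A t)" and dA: "mat_differentiable A t0"
  shows "mat_differentiable (\<lambda>t. ltinv (A t)) t0"
    "mat_deriv (\<lambda>t. ltinv (A t)) t0 = mneg (mmult (mmult (ltinv (A t0)) (mat_deriv A t0)) (ltinv (A t0)))"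
proof -
  let ?A' = "mat_deriv A t0" and ?B = "ltinv (A t0)" and ?B' = "mat_deriv (\<lambda>t. ltinv (A t)) t0"
  have A0: "lower_unitri (A t0)"
    using ev by (rule eventually_nhds_x_imp_x)
  have "mat_differentiable (\<lambda>t. inv_rec (A t)) t0"
    using dA unfolding mat_differentiable_def by (blast intro: field_differentiable_inv_rec)
  moreover have "\<forall>\<^sub>F t in nhds t0. ltinv (A t) = inv_rec (A t)"
    using ev by (rule eventually_mono) (rule ltinv_eq_inv_rec)
  ultimately show dB: "mat_differentiable (\<lambda>t. ltinv (A t)) t0"
    by (rule mat_differentiable_cong_ev[rotated])
  have band: "\<forall>\<^sub>F t in nhds t0. upper_band 0 (A t)"
    using ev by (rule eventually_mono) (auto simp: lower_unitri_def lower_tri_def upper_band_def)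
  have "\<forall>\<^sub>F t in nhds t0. mmult (A t) (ltinv (A t)) = idm"
    using ev by (rule eventually_mono) simp
  then have "mat_deriv (\<lambda>t. mmult (A t) (ltinv (A t))) t0 = (\<lambda>i j. 0)"
    by (simp add: mat_deriv_cong_ev)
  then have "madd (mmult ?A' ?B) (mmult (A t0) ?B') = (\<lambda>i j. 0)"
    using mat_deriv_mmult(2)[OF band dA dB] by simp
  then have AB': "mmult (A t0) ?B' = mneg (mmult ?A' ?B)"
    unfolding mneg_def madd_def by (intro ext) (metis add_eq_0_iff)
  have "upper_banded ?A'"
    using upper_band_mat_deriv[OF band] upper_banded_def by blast
  then have "?B' = mmult ?B (mneg (mmult ?A' ?B))"
    using A0 by (simp add: AB'[symmetric] mmult_assoc[symmetric])
  then show "?B' = mneg (mmult (mmult ?B ?A') ?B)"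
    using A0 \<open>upper_banded ?A'\<close> by (simp add: mmult_mneg_right mmult_assoc)
qed

lemma mat_deriv_ltinv_diagonal:
  assumes ev: "\<forall>\<^sub>F t in nhds t0. diagonal (H t) \<and> (\<forall>k. H t k k \<noteq> 0)"
    and dH: "mat_differentiable H t0"
  shows "mat_deriv (\<lambda>t. ltinv (H t)) t0
    = (\<lambda>i j. if i = j then - mat_deriv H t0 i i / (H t0 i i)\<^sup>2 else 0)"
proof -
  have "\<forall>\<^sub>F t in nhds t0. ltinv (H t) = (\<lambda>i j. if i = j then inverse (H t i i) else 0)"
    using ev by (rule eventually_mono) (simp add: ltinv_diagonal)
  then have "mat_deriv (\<lambda>t. ltinv (H t)) t0
      = mat_deriv (\<lambda>t i j. if i = j then inverse (H t i i) else 0) t0"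
    by (rule mat_deriv_cong_ev)
  also have "\<dots> = (\<lambda>i j. if i = j then - mat_deriv H t0 i i / (H t0 i i)\<^sup>2 else 0)"
  proof (rule mat_derivI(2))
    have "H t0 i i \<noteq> 0" for i
      using eventually_nhds_x_imp_x[OF ev] by blast
    then show "((\<lambda>t. if i = j then inverse (H t i i) else 0) has_field_derivative
        (if i = j then - mat_deriv H t0 i i / (H t0 i i)\<^sup>2 else 0)) (at t0)" for i j
      using DERIV_inverse_fun[OF mat_differentiable_has_derivative[OF dH]]
      by (auto simp: divide_inverse power2_eq_square)
  qed
  finally show ?thesis .
qed

section \<open>Gauss--Borel factorizations\<close>

definition gauss_borel :: "rmat \<Rightarrow> rmat \<Rightarrow> rmat \<Rightarrow> rmat \<Rightarrow> bool" where
  "gauss_borel M S St H \<longleftrightarrow> lower_unitri S \<and> lower_unitri St \<and> diagonal H \<and> (\<forall>k. H k k \<noteq> 0)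
     \<and> M = mmult (mmult (ltinv S) H) (mtrans (ltinv St))"

lemma mmult_ldu_entry:
  assumes A: "lower_unitri A" and C: "lower_unitri C" and H: "diagonal H"
  shows "mmult (mmult A H) (mtrans C) i j = (\<Sum>k\<le>min i j. A i k * H k k * C j k)"
proof -
  have "lower_band 0 (mtrans C)"
    using C by (auto simp: lower_unitri_def lower_tri_def upper_band_def)
  then have "mmult (mmult A H) (mtrans C) i j = (\<Sum>k\<le>j. A i k * H k k * C j k)"
    by (subst mmult_eq_sum_lower_band) (auto simp: mmult_diagonal_right[OF H] mtrans_def)
  also have "\<dots> = (\<Sum>k\<le>min i j. A i k * H k k * C j k)"
    by (rule sum.mono_neutral_right) (use A in \<open>auto simp: lower_unitri_def lower_tri_def\<close>)
  finally show ?thesis .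
qed

lemma lead_minor_det: "lead_minor X n = det (mat n n (\<lambda>(i, j). X i j))"
proof -
  have "det (mat n n (\<lambda>(i, j). X i j)) = (\<Sum>p\<in>{p. p permutes {0..<n}}.
      of_int (sign p) * (\<Prod>i=0..<n. mat n n (\<lambda>(i, j). X i j) $$ (i, p i)))"
    by (rule det_def') simp
  also have "\<dots> = (\<Sum>p\<in>{p. p permutes {..<n}}. of_int (sign p) * (\<Prod>i<n. X i (p i)))"
    by (intro sum.cong refl arg_cong2[where f="(*)"] prod.cong)
      (auto simp: atLeast0LessThan permutes_in_image)
  finally show ?thesis
    unfolding lead_minor_def by simp
qed

lemma lead_minor_ldu:
  assumes A: "lower_unitri A" and C: "lower_unitri C" and H: "diagonal H"
  shows "lead_minor (mmult (mmult A H) (mtrans C)) n = (\<Prod>i<n. H i i)"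
proof -
  define Am where "Am = (mat n n (\<lambda>(i, j). A i j) :: real mat)"
  define Bm where "Bm = (mat n n (\<lambda>(i, j). H i i * C j i) :: real mat)"
  have cA: "Am \<in> carrier_mat n n" and cB: "Bm \<in> carrier_mat n n"
    by (auto simp: Am_def Bm_def)
  have "mat n n (\<lambda>(i, j). mmult (mmult A H) (mtrans C) i j) = Am * Bm"
  proof (rule eq_matI)
    fix i j
    assume "i < dim_row (Am * Bm)" "j < dim_col (Am * Bm)"
    then have i: "i < n" and j: "j < n"
      by (auto simp: Am_def Bm_def)
    have "(Am * Bm) $$ (i, j) = (\<Sum>k<n. A i k * H k k * C j k)"
      using i j by (simp add: Am_def Bm_def scalar_prod_def atLeast0LessThan mult.assoc)
    also have "\<dots> = (\<Sum>k\<le>min i j. A i k * H k k * C j k)"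
      by (rule sum.mono_neutral_right) (use A C i j in \<open>auto simp: lower_unitri_def lower_tri_def\<close>)
    finally show "mat n n (\<lambda>(i, j). mmult (mmult A H) (mtrans C) i j) $$ (i, j) = (Am * Bm) $$ (i, j)"
      using i j by (simp add: mmult_ldu_entry[OF A C H])
  qed (auto simp: Am_def Bm_def)
  moreover have "det Am = 1"
    using A det_lower_triangular[OF _ cA]
    by (simp add: Am_def lower_unitri_def lower_tri_def prod_list_diag_prod)
  moreover have "det Bm = (\<Prod>i<n. H i i)"
    using C det_upper_triangular[OF _ cB]
    by (simp add: Bm_def upper_triangular_def lower_unitri_def lower_tri_def prod_list_diag_prod
        atLeast0LessThan)
  ultimately show ?thesis
    by (simp add: lead_minor_det det_mult[OF cA cB])
qed

lemma gauss_borelI: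
  assumes "lower_unitri S" "lower_unitri St" "diagonal H"
    and M: "M = mmult (mmult (ltinv S) H) (mtrans (ltinv St))"
    and minors: "\<forall>n. lead_minor M n \<noteq> 0"
  shows "gauss_borel M S St H"
proof -
  have "lead_minor M (Suc k) = (\<Prod>i<Suc k. H i i)" for k
    unfolding M using assms(1-3) by (intro lead_minor_ldu) auto
  then have "H k k \<noteq> 0" for k
    using minors by (metis mult_eq_0_iff prod.lessThan_Suc)
  then show ?thesis
    using assms unfolding gauss_borel_def by auto
qed

lemma gauss_borel_mmult_mtrans:
  assumes "gauss_borel M S St H"
  shows "mmult M (mtrans St) = mmult (ltinv S) H"
proof -
  have St: "lower_unitri St" and M: "M = mmult (mmult (ltinv S) H) (mtrans (ltinv St))"
    using assms by (auto simp: gauss_borel_def)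
  have "mmult M (mtrans St) = mmult (mmult (ltinv S) H) (mmult (mtrans (ltinv St)) (mtrans St))"
    unfolding M using St by (intro mmult_assoc_lower_banded) auto
  also have "mmult (mtrans (ltinv St)) (mtrans St) = idm"
    using St by (simp flip: mtrans_mmult)
  finally show ?thesis
    by simp
qed

lemma gauss_borel_diagonal:
  assumes "gauss_borel M S St H"
  shows "mmult (mmult S M) (mtrans St) = H"
proof -
  have "lower_unitri S" "lower_unitri St"
    using assms by (auto simp: gauss_borel_def)
  then show ?thesis
    using gauss_borel_mmult_mtrans[OF assms] by (simp add: mmult_assoc_upper_lower)
qed

lemma gauss_borel_Lam:
  assumes "gauss_borel M S St H"
  shows "mmult (mmult S (mmult Lam M)) (mtrans St) = mmult (Tmat S) H"
proof -
  have "lower_unitri S" "lower_unitri St" "diagonal H"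
    using assms by (auto simp: gauss_borel_def)
  then show ?thesis
    using gauss_borel_mmult_mtrans[OF assms] by (simp add: mmult_assoc_upper_lower Tmat_def mmult_assoc)
qed

lemma doolittle_step:
  fixes A C M :: "real \<Rightarrow> rmat" and h :: "real \<Rightarrow> nat \<Rightarrow> real"
  assumes ev: "\<forall>\<^sub>F t in nhds t0. lower_unitri (A t) \<and> lower_unitri (C t) \<and> (\<forall>k. h t k \<noteq> 0)
      \<and> (\<forall>i j. M t i j = (\<Sum>k\<le>min i j. A t i k * h t k * C t j k))"
    and dM: "mat_differentiable M t0"
    and IH: "\<And>k. k < m \<Longrightarrow> (\<lambda>t. h t k) field_differentiable (at t0)
      \<and> (\<forall>i. (\<lambda>t. A t i k) field_differentiable (at t0))
      \<and> (\<forall>j. (\<lambda>t. C t j k) field_differentiable (at t0))"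
  shows "(\<lambda>t. h t m) field_differentiable (at t0) \<and> (\<forall>i. (\<lambda>t. A t i m) field_differentiable (at t0))"
proof -
  define R where "R t i = (\<Sum>k<m. A t i k * h t k * C t m k)" for t i
  have fR: "(\<lambda>t. R t i) field_differentiable (at t0)" for i
    unfolding R_def using IH by (intro field_differentiable_sum field_differentiable_mult) auto
  have fM: "(\<lambda>t. M t i m) field_differentiable (at t0)" for i
    using dM unfolding mat_differentiable_def by blast
  have col: "\<forall>\<^sub>F t in nhds t0. (\<forall>k. h t k \<noteq> 0) \<and> (\<forall>i\<ge>m. M t i m = A t i m * h t m + R t i)"
    using ev by (rule eventually_mono)
      (auto simp: R_def lessThan_Suc_atMost[symmetric] min_absorb2 lower_unitri_def)
  have fh: "(\<lambda>t. h t m) field_differentiable (at t0)"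
  proof (rule field_differentiable_cong_ev)
    show "\<forall>\<^sub>F t in nhds t0. h t m = M t m m - R t m"
      using eventually_conj[OF col ev] by (rule eventually_mono) (auto simp: lower_unitri_def)
  qed (intro field_differentiable_diff fM fR)
  have "(\<lambda>t. A t i m) field_differentiable (at t0)" for i
  proof (cases "i < m")
    case True
    have "\<forall>\<^sub>F t in nhds t0. A t i m = 0"
      using ev True by (auto elim!: eventually_mono simp: lower_unitri_def lower_tri_def)
    then show ?thesis
      by (rule field_differentiable_cong_ev[OF _ field_differentiable_const])
  next
    case False
    have "h t0 m \<noteq> 0"
      using eventually_nhds_x_imp_x[OF col] by blast
    show ?thesis
    proof (rule field_differentiable_cong_ev)
      show "\<forall>\<^sub>F t in nhds t0. A t i m = (M t i m - R t i) / h t m"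
        using col False by (auto elim!: eventually_mono)
    qed (intro field_differentiable_diff field_differentiable_divide fM fR fh \<open>h t0 m \<noteq> 0\<close>)
  qed
  with fh show ?thesis
    by blast
qed

lemma doolittle_differentiable:
  assumes ev: "\<forall>\<^sub>F t in nhds t0. lower_unitri (A t) \<and> lower_unitri (C t) \<and> diagonal (H t)
      \<and> (\<forall>k. H t k k \<noteq> 0) \<and> M t = mmult (mmult (A t) (H t)) (mtrans (C t))"
    and dM: "mat_differentiable M t0"
  shows "mat_differentiable A t0" "mat_differentiable C t0" "mat_differentiable H t0"
proof -
  have ent: "\<forall>\<^sub>F t in nhds t0. lower_unitri (A t) \<and> lower_unitri (C t) \<and> (\<forall>k. H t k k \<noteq> 0)
      \<and> (\<forall>i j. M t i j = (\<Sum>k\<le>min i j. A t i k * H t k k * C t j k))"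
    using ev by (rule eventually_mono) (simp add: mmult_ldu_entry)
  have ent': "\<forall>\<^sub>F t in nhds t0. lower_unitri (C t) \<and> lower_unitri (A t) \<and> (\<forall>k. H t k k \<noteq> 0)
      \<and> (\<forall>i j. mtrans (M t) i j = (\<Sum>k\<le>min i j. C t i k * H t k k * A t j k))"
    using ent by (rule eventually_mono) (simp add: mtrans_def min.commute mult_ac)
  have cols: "(\<lambda>t. H t m m) field_differentiable (at t0)
      \<and> (\<forall>i. (\<lambda>t. A t i m) field_differentiable (at t0))
      \<and> (\<forall>j. (\<lambda>t. C t j m) field_differentiable (at t0))" for m
  proof (induction m rule: less_induct)
    case (less m)
    show ?case
      using doolittle_step[OF ent dM, of m] doolittle_step[OF ent', of m] dM less by auto
  qed
  show "mat_differentiable A t0" "mat_differentiable C t0"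
    using cols unfolding mat_differentiable_def by blast+
  show "mat_differentiable H t0"
    unfolding mat_differentiable_def
  proof (intro allI)
    fix i j
    show "(\<lambda>t. H t i j) field_differentiable (at t0)"
    proof (cases "i = j")
      case False
      have "\<forall>\<^sub>F t in nhds t0. H t i j = 0"
        using ev False by (auto elim!: eventually_mono simp: diagonal_def)
      then show ?thesis
        by (rule field_differentiable_cong_ev[OF _ field_differentiable_const])
    qed (use cols in blast)
  qed
qed

lemma gauss_borel_differentiable:
  assumes ev: "\<forall>\<^sub>F t in nhds t0. gauss_borel (M t) (S t) (St t) (H t)"
    and dM: "mat_differentiable M t0"
  shows "mat_differentiable S t0" "mat_differentiable St t0" "mat_differentiable H t0"
proof -
  have "\<forall>\<^sub>F t in nhds t0. lower_unitri (ltinv (S t)) \<and> lower_unitri (ltinv (St t)) \<and> diagonal (H t)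
      \<and> (\<forall>k. H t k k \<noteq> 0) \<and> M t = mmult (mmult (ltinv (S t)) (H t)) (mtrans (ltinv (St t)))"
    using ev by (rule eventually_mono) (simp add: gauss_borel_def)
  note D = doolittle_differentiable[OF this dM]
  show "mat_differentiable H t0"
    by (rule D(3))
  have "\<forall>\<^sub>F t in nhds t0. lower_unitri (ltinv (S t)) \<and> lower_unitri (ltinv (St t))"
    using ev by (rule eventually_mono) (simp add: gauss_borel_def)
  then have dS: "mat_differentiable (\<lambda>t. ltinv (ltinv (S t))) t0"
    and dSt: "mat_differentiable (\<lambda>t. ltinv (ltinv (St t))) t0"
    using D(1,2) by (auto intro: mat_deriv_ltinv(1) elim: eventually_mono)
  have "\<forall>\<^sub>F t in nhds t0. S t = ltinv (ltinv (S t))"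
    using ev by (rule eventually_mono) (simp add: gauss_borel_def)
  then show "mat_differentiable S t0"
    using dS by (rule mat_differentiable_cong_ev)
  have "\<forall>\<^sub>F t in nhds t0. St t = ltinv (ltinv (St t))"
    using ev by (rule eventually_mono) (simp add: gauss_borel_def)
  then show "mat_differentiable St t0"
    using dSt by (rule mat_differentiable_cong_ev)
qed

section \<open>Derivatives of the factors and of \<open>\<Psi>\<close>\<close>

lemma strictly_lower_mat_deriv:
  assumes "\<forall>\<^sub>F t in nhds t0. lower_unitri (A t)"
  shows "strictly_lower (mat_deriv A t0)"
  unfolding strictly_lower_def
proof (intro allI impI)
  fix i j :: nat
  assume "i \<le> j"
  then have "\<forall>\<^sub>F t in nhds t0. A t i j = (if i = j then 1 else 0)"
    using assms by (auto elim!: eventually_mono simp: lower_unitri_def lower_tri_def)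
  then show "mat_deriv A t0 i j = 0"
    by (rule mat_deriv_eq_zero)
qed

lemma diagonal_mat_deriv:
  assumes "\<forall>\<^sub>F t in nhds t0. diagonal (A t)"
  shows "diagonal (mat_deriv A t0)"
  unfolding diagonal_def
proof (intro allI impI)
  fix i j :: nat
  assume "i \<noteq> j"
  then have "\<forall>\<^sub>F t in nhds t0. A t i j = 0"
    using assms by (auto elim!: eventually_mono simp: diagonal_def)
  then show "mat_deriv A t0 i j = 0"
    by (rule mat_deriv_eq_zero)
qed

lemma mat_deriv_gauss_borel:
  assumes ev: "\<forall>\<^sub>F t in nhds t0. gauss_borel (M t) (S t) (St t) (H t)"
    and dM: "mat_differentiable M t0"
  shows "madd (madd (mmult (mmult (mat_deriv S t0) (ltinv (S t0))) (H t0))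
                (mmult (mmult (S t0) (mat_deriv M t0)) (mtrans (St t0))))
          (mmult (H t0) (mtrans (mmult (mat_deriv St t0) (ltinv (St t0))))) = mat_deriv H t0"
proof -
  let ?S = "S t0" and ?St = "St t0" and ?H = "H t0" and ?M = "M t0"
  let ?S' = "mat_deriv S t0" and ?St' = "mat_deriv St t0" and ?M' = "mat_deriv M t0"
  have GB: "gauss_borel ?M ?S ?St ?H"
    using ev by (rule eventually_nhds_x_imp_x)
  then have S: "lower_unitri ?S" and St: "lower_unitri ?St" and H: "diagonal ?H"
    by (auto simp: gauss_borel_def)
  have bS: "\<forall>\<^sub>F t in nhds t0. upper_band 0 (S t)"
    and bSt: "\<forall>\<^sub>F t in nhds t0. upper_band 0 (St t)"
    using ev by (auto elim!: eventually_mono simp: gauss_borel_def lower_unitri_def lower_tri_def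
        upper_band_def)
  have S': "upper_banded ?S'" and St': "upper_banded ?St'"
    using upper_band_mat_deriv[OF bS] upper_band_mat_deriv[OF bSt] upper_banded_def by blast+
  note dS = gauss_borel_differentiable(1,2)[OF ev dM]
  note d1 = mat_deriv_mmult[OF bS dS(1) dM]
  have "\<forall>\<^sub>F t in nhds t0. lower_band 0 (mtrans (St t))"
    using bSt by simp
  note d2 = mat_deriv_mmult_lower_band[OF this d1(1), unfolded mat_differentiable_mtrans]
  have "mat_deriv H t0 = mat_deriv (\<lambda>t. mmult (mmult (S t) (M t)) (mtrans (St t))) t0"
    using ev by (intro mat_deriv_cong_ev) (auto elim!: eventually_mono simp: gauss_borel_diagonal)
  also have "\<dots> = madd (madd (mmult (mmult ?S' ?M) (mtrans ?St)) (mmult (mmult ?S ?M') (mtrans ?St)))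
      (mmult (mmult ?S ?M) (mtrans ?St'))"
    using d2(2) dS(2) St by (simp add: d1(2) mat_deriv_mtrans mmult_madd_left_lower_banded)
  also have "mmult (mmult ?S' ?M) (mtrans ?St) = mmult (mmult ?S' (ltinv ?S)) ?H"
    using S' S St by (simp add: mmult_assoc_upper_lower gauss_borel_mmult_mtrans[OF GB] mmult_assoc)
  also have "mmult (mmult ?S ?M) (mtrans ?St') = mmult ?H (mtrans (mmult ?St' (ltinv ?St)))"
    using GB St St' H by (simp add: gauss_borel_def mmult_assoc mmult_assoc_lower_banded mtrans_mmult)
  finally show ?thesis ..
qed

lemma upper_banded_Psi [simp, intro]: "lower_unitri S \<Longrightarrow> upper_banded (Psi c N S)"
  by (simp add: Psi_conj)

lemma mat_deriv_Psi:
  assumes ev: "\<forall>\<^sub>F t in nhds t0. lower_unitri (S t)" and dS: "mat_differentiable S t0"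
  shows "mat_deriv (\<lambda>t. Psi c N (S t)) t0
    = comm (mmult (mat_deriv S t0) (ltinv (S t0))) (Psi c N (S t0))"
proof -
  let ?K = "Psi_kernel c N" and ?S = "S t0" and ?S' = "mat_deriv S t0" and ?A = "ltinv (S t0)"
  have S: "lower_unitri ?S"
    using ev by (rule eventually_nhds_x_imp_x)
  have bS: "\<forall>\<^sub>F t in nhds t0. upper_band 0 (S t)"
    using ev by (auto elim!: eventually_mono simp: lower_unitri_def lower_tri_def upper_band_def)
  then have S': "upper_banded ?S'"
    using upper_band_mat_deriv upper_banded_def by blast
  obtain w where "upper_band w ?K"
    using upper_banded_Psi_kernel upper_banded_def by blast
  with bS have bSK: "\<forall>\<^sub>F t in nhds t0. upper_band w (mmult (S t) ?K)"
    by (auto elim!: eventually_mono dest: upper_band_mmult[of 0 _ w])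
  note d1 = mat_deriv_mmult[OF bS dS mat_differentiable_const, of ?K]
  note dA = mat_deriv_ltinv[OF ev dS]
  have "mat_deriv (\<lambda>t. Psi c N (S t)) t0 = mat_deriv (\<lambda>t. mmult (mmult (S t) ?K) (ltinv (S t))) t0"
    using ev by (intro mat_deriv_cong_ev) (auto elim!: eventually_mono simp: Psi_conj)
  also have "\<dots> = madd (mmult (mmult ?S' ?K) ?A) (mmult (mmult ?S ?K) (mneg (mmult (mmult ?A ?S') ?A)))"
    using mat_deriv_mmult(2)[OF bSK d1(1) dA(1)] d1(2) dA(2) by simp
  also have "\<dots> = comm (mmult ?S' ?A) (Psi c N ?S)"
    using S S' by (simp add: Psi_conj comm_def mmult_assoc mmult_mneg_right)
      (simp add: madd_def msub_def mneg_def)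
  finally show ?thesis .
qed

section \<open>The Euler operator\<close>

definition partially_differentiable :: "(real \<Rightarrow> real \<Rightarrow> rmat) \<Rightarrow> real \<Rightarrow> real \<Rightarrow> bool" where
  "partially_differentiable F x y \<longleftrightarrow>
     mat_differentiable (\<lambda>t. F t y) x \<and> mat_differentiable (\<lambda>t. F x t) y"

lemma vth1_eq: "vth1 F x y = mscale x (mat_deriv (\<lambda>t. F t y) x)"
  unfolding vth1_def mscale_def mat_deriv_def ..

lemma vth2_eq: "vth2 F x y = mscale y (mat_deriv (\<lambda>t. F x t) y)"
  unfolding vth2_def mscale_def mat_deriv_def ..

lemma vth_mtrans: "vth (\<lambda>u v. mtrans (F u v)) x y = mtrans (vth F x y)"
  unfolding vth_def vth1_def vth2_def madd_def mtrans_def ..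

lemma eventually_nhds_slices:
  assumes "open U" "(x, y) \<in> U" "\<forall>(u, v)\<in>U. P u v"
  shows "\<forall>\<^sub>F t in nhds x. P t y" "\<forall>\<^sub>F t in nhds y. P x t"
proof -
  have "open ((\<lambda>s. (s, y)) -` U)" "open ((\<lambda>s. (x, s)) -` U)"
    using assms(1) by (auto intro!: continuous_open_vimage continuous_intros)
  then have "\<forall>\<^sub>F t in nhds x. (t, y) \<in> U" "\<forall>\<^sub>F t in nhds y. (x, t) \<in> U"
    using assms(2) by (auto dest!: eventually_nhds_in_open)
  then show "\<forall>\<^sub>F t in nhds x. P t y" "\<forall>\<^sub>F t in nhds y. P x t"
    using assms(3) by (auto elim!: eventually_mono)
qed

lemma strictly_lower_vth:
  assumes "open U" "(x, y) \<in> U" "\<forall>(u, v)\<in>U. lower_unitri (S u v)"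
  shows "strictly_lower (vth1 S x y)" "strictly_lower (vth2 S x y)" "strictly_lower (vth S x y)"
  using strictly_lower_mat_deriv[OF eventually_nhds_slices(1)[OF assms]]
    strictly_lower_mat_deriv[OF eventually_nhds_slices(2)[OF assms]]
  by (auto simp: vth_def vth1_eq vth2_eq strictly_lower_def mscale_def madd_def)

lemma diagonal_vth:
  assumes "open U" "(x, y) \<in> U" "\<forall>(u, v)\<in>U. diagonal (H u v)"
  shows "diagonal (vth H x y)"
  using diagonal_mat_deriv[OF eventually_nhds_slices(1)[OF assms]]
    diagonal_mat_deriv[OF eventually_nhds_slices(2)[OF assms]]
  by (auto simp: vth_def vth1_eq vth2_eq diagonal_def mscale_def madd_def)

lemma gauss_borel_partially_differentiable:
  assumes "open U" "(x, y) \<in> U" "\<forall>(u, v)\<in>U. gauss_borel (M u v) (S u v) (St u v) (H u v)"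
    and "partially_differentiable M x y"
  shows "partially_differentiable S x y" "partially_differentiable St x y"
    "partially_differentiable H x y"
  using gauss_borel_differentiable[OF eventually_nhds_slices(1)[OF assms(1-3)]]
    gauss_borel_differentiable[OF eventually_nhds_slices(2)[OF assms(1-3)]] assms(4)
  unfolding partially_differentiable_def by auto

lemma vth_Psi:
  assumes U: "open U" "(x, y) \<in> U" and S: "\<forall>(u, v)\<in>U. lower_unitri (S u v)"
    and dS: "partially_differentiable S x y"
  shows "vth (\<lambda>u v. Psi c N (S u v)) x y
    = comm (mmult (vth S x y) (ltinv (S x y))) (Psi c N (S x y))"
proof -
  note ev = eventually_nhds_slices[OF U S]
  have "vth1 (\<lambda>u v. Psi c N (S u v)) x y = comm (mmult (vth1 S x y) (ltinv (S x y))) (Psi c N (S x y))"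
    using mat_deriv_Psi[OF ev(1)] dS by (simp add: partially_differentiable_def vth1_eq comm_mscale_left)
  moreover have "vth2 (\<lambda>u v. Psi c N (S u v)) x y = comm (mmult (vth2 S x y) (ltinv (S x y))) (Psi c N (S x y))"
    using mat_deriv_Psi[OF ev(2)] dS by (simp add: partially_differentiable_def vth2_eq comm_mscale_left)
  ultimately show ?thesis
    using strictly_lower_vth(1,2)[OF U S] S U(2)
    by (auto simp: vth_def[of "\<lambda>u v. Psi c N (S u v)"] vth_def[of S] comm_madd_left mmult_madd_left)
qed

lemma vth_gauss_borel:
  assumes U: "open U" "(x, y) \<in> U"
    and GB: "\<forall>(u, v)\<in>U. gauss_borel (M u v) (S u v) (St u v) (H u v)"
    and dM: "partially_differentiable M x y"
  shows "madd (madd (mmult (mmult (vth S x y) (ltinv (S x y))) (H x y))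
                (mmult (mmult (S x y) (vth M x y)) (mtrans (St x y))))
          (mmult (H x y) (mtrans (mmult (vth St x y) (ltinv (St x y))))) = vth H x y"
proof -
  note ev = eventually_nhds_slices[OF U GB]
  have "gauss_borel (M x y) (S x y) (St x y) (H x y)"
    using GB U(2) by auto
  then have S: "lower_unitri (S x y)" and St: "lower_unitri (St x y)" and H: "diagonal (H x y)"
    by (auto simp: gauss_borel_def)
  have "\<forall>(u, v)\<in>U. lower_unitri (S u v)" "\<forall>(u, v)\<in>U. lower_unitri (St u v)"
    using GB by (auto simp: gauss_borel_def)
  note lower = strictly_lower_vth(1,2)[OF U this(1)] strictly_lower_vth(1,2)[OF U this(2)]
  have E1: "madd (madd (mmult (mmult (vth1 S x y) (ltinv (S x y))) (H x y))
                (mmult (mmult (S x y) (vth1 M x y)) (mtrans (St x y))))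
          (mmult (H x y) (mtrans (mmult (vth1 St x y) (ltinv (St x y))))) = vth1 H x y"
    using arg_cong[OF mat_deriv_gauss_borel[OF ev(1)], of "mscale x"] dM
    by (simp add: partially_differentiable_def vth1_eq mscale_madd mtrans_mscale)
  have E2: "madd (madd (mmult (mmult (vth2 S x y) (ltinv (S x y))) (H x y))
                (mmult (mmult (S x y) (vth2 M x y)) (mtrans (St x y))))
          (mmult (H x y) (mtrans (mmult (vth2 St x y) (ltinv (St x y))))) = vth2 H x y"
    using arg_cong[OF mat_deriv_gauss_borel[OF ev(2)], of "mscale y"] dM
    by (simp add: partially_differentiable_def vth2_eq mscale_madd mtrans_mscale)
  show ?thesis
    unfolding vth_def[of S] vth_def[of M] vth_def[of St] vth_def[of H] E1[symmetric] E2[symmetric]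
    using S St H lower
    by (simp add: mmult_madd_left mmult_madd_left_lower_banded mmult_madd_right mtrans_madd)
      (simp add: madd_def algebra_simps)
qed

lemma vth_ltinv_diagonal:
  assumes U: "open U" "(x, y) \<in> U" and H: "\<forall>(u, v)\<in>U. diagonal (H u v) \<and> (\<forall>k. H u v k k \<noteq> 0)"
    and dH: "partially_differentiable H x y"
  shows "vth (\<lambda>u v. ltinv (H u v)) x y = (\<lambda>i j. if i = j then - vth H x y i i / (H x y i i)\<^sup>2 else 0)"
  using mat_deriv_ltinv_diagonal[OF eventually_nhds_slices(1)[OF U H]]
    mat_deriv_ltinv_diagonal[OF eventually_nhds_slices(2)[OF U H]] dH
  by (auto intro!: ext simp: vth_def vth1_eq vth2_eq partially_differentiable_def madd_def mscale_def
      add_divide_distrib diff_divide_distrib)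

lemma euler_deriv_power_series:
  fixes a :: "nat \<Rightarrow> real"
  assumes V: "open V" "x \<in> V" and sm: "\<forall>s\<in>V. \<forall>n. summable (\<lambda>k. real k ^ n * (a k * s ^ k))"
  shows "(\<lambda>t. \<Sum>k. real k ^ p * (a k * t ^ k)) field_differentiable (at x)"
    "x * deriv (\<lambda>t. \<Sum>k. real k ^ p * (a k * t ^ k)) x = (\<Sum>k. real k ^ Suc p * (a k * x ^ k))"
proof -
  define e where "e k = real k ^ p * a k" for k
  obtain d where d: "d > 0" "ball x d \<subseteq> V"
    using V open_contains_ball by blast
  define K where "K = (if x \<ge> 0 then x + d/2 else x - d/2)"
  have "K \<in> V"
    using d by (auto simp: K_def dist_real_def intro!: subsetD[OF d(2)])
  then have "summable (\<lambda>k. e k * K ^ k)"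
    using sm unfolding e_def by (auto simp: mult.assoc)
  moreover have "norm x < norm K"
    using d by (auto simp: K_def)
  ultimately have D: "((\<lambda>t. \<Sum>k. e k * t ^ k) has_field_derivative (\<Sum>n. diffs e n * x ^ n)) (at x)"
    by (rule termdiffs_strong)
  have f: "(\<lambda>t. \<Sum>k. real k ^ p * (a k * t ^ k)) = (\<lambda>t. \<Sum>k. e k * t ^ k)"
    by (simp add: e_def mult.assoc)
  show "(\<lambda>t. \<Sum>k. real k ^ p * (a k * t ^ k)) field_differentiable (at x)"
    unfolding f field_differentiable_def using D by blast
  define g where "g k = real k ^ Suc p * (a k * x ^ k)" for k
  have "g sums (\<Sum>k. g k)"
    using sm V unfolding g_def by (blast intro: summable_sums)
  \<comment> \<open>termwise, \<open>x\<close> times the derivative series is the series \<open>g\<close> shifted by one\<close>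
  then have g: "(\<lambda>n. x * (diffs e n * x ^ n)) sums (\<Sum>k. g k)"
    using sums_Suc_iff[of g] by (simp add: g_def diffs_def e_def algebra_simps)
  have "x * (\<Sum>n. diffs e n * x ^ n) = (\<Sum>k. g k)"
  proof (cases "x = 0")
    case True
    then have "g = (\<lambda>k. 0)"
      by (auto simp: g_def)
    then show ?thesis
      using True by simp
  next
    case False
    from sums_mult[OF g, of "inverse x"] False
    have "(\<lambda>n. diffs e n * x ^ n) sums (inverse x * (\<Sum>k. g k))"
      by (simp add: mult.assoc[symmetric])
    then show ?thesis
      using False by (simp add: sums_iff)
  qed
  then show "x * deriv (\<lambda>t. \<Sum>k. real k ^ p * (a k * t ^ k)) x = (\<Sum>k. real k ^ Suc p * (a k * x ^ k))"
    unfolding f g_def DERIV_imp_deriv[OF D] .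
qed

lemma hweight_eq_power: "hweight M b N c t k = hweight M b N c 1 k * t ^ k"
  by (simp add: hweight_def)

lemma vth_moment:
  fixes w1 w2 :: "real \<Rightarrow> nat \<Rightarrow> real"
  assumes U: "open U" "(x, y) \<in> U"
    and w1: "\<And>u k. w1 u k = w1 1 k * u ^ k" and w2: "\<And>v k. w2 v k = w2 1 k * v ^ k"
    and sm1: "\<forall>(u, v)\<in>U. \<forall>n. summable (\<lambda>k. real k ^ n * w1 u k)"
    and sm2: "\<forall>(u, v)\<in>U. \<forall>n. summable (\<lambda>k. real k ^ n * w2 v k)"
  shows "partially_differentiable (\<lambda>u v. moment (w1 u) (w2 v)) x y"
    "vth (\<lambda>u v. moment (w1 u) (w2 v)) x y = mmult Lam (moment (w1 x) (w2 y))"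
proof -
  define a b where "a k = w1 1 k" and "b k = w2 1 k" for k
  have w: "w1 = (\<lambda>u k. a k * u ^ k)" "w2 = (\<lambda>v k. b k * v ^ k)"
    unfolding a_def b_def by (intro ext, rule w1, intro ext, rule w2)
  have V: "open ((\<lambda>s. (s, y)) -` U)" "x \<in> (\<lambda>s. (s, y)) -` U"
    "open ((\<lambda>s. (x, s)) -` U)" "y \<in> (\<lambda>s. (x, s)) -` U"
    using U by (auto intro!: continuous_open_vimage continuous_intros)
  have "\<forall>s\<in>(\<lambda>s. (s, y)) -` U. \<forall>n. summable (\<lambda>k. real k ^ n * (a k * s ^ k))"
    "\<forall>s\<in>(\<lambda>s. (x, s)) -` U. \<forall>n. summable (\<lambda>k. real k ^ n * (b k * s ^ k))"
    using sm1 sm2 by (auto simp: w)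
  note P1 = euler_deriv_power_series[OF V(1,2) this(1)] and P2 = euler_deriv_power_series[OF V(3,4) this(2)]
  have entry: "(\<lambda>t. moment (w1 t) (w2 y) n m) field_differentiable (at x)
    \<and> (\<lambda>t. moment (w1 x) (w2 t) n m) field_differentiable (at y)
    \<and> x * deriv (\<lambda>t. moment (w1 t) (w2 y) n m) x + y * deriv (\<lambda>t. moment (w1 x) (w2 t) n m) y
      = moment (w1 x) (w2 y) (Suc n) m" for n m
    using P1 P2 by (cases "even m") (simp_all add: w moment_def field_differentiable_const)
  then show "partially_differentiable (\<lambda>u v. moment (w1 u) (w2 v)) x y"
    "vth (\<lambda>u v. moment (w1 u) (w2 v)) x y = mmult Lam (moment (w1 x) (w2 y))"
    by (auto intro!: ext simp: partially_differentiable_def mat_differentiable_def vth_def vth1_def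
        vth2_def madd_def Lam_mmult)
qed

section \<open>The Laguerre--Freud relations\<close>

lemma euler_identity_triangular_parts:
  assumes H: "diagonal H" "\<forall>k. H k k \<noteq> 0"
    and P: "strictly_lower P" and Q: "strictly_lower Q" and D: "diagonal D"
    and E: "madd (madd (mmult P H) (mmult T H)) (mmult H (mtrans Q)) = D"
  shows "P = mneg (lowpart T)"
    "madd (mmult (\<lambda>i j. if i = j then - D i i / (H i i)\<^sup>2 else 0) H) (mmult (mmult (ltinv H) Q) H)
      = mneg (mtrans (uppart T))"
proof -
  have E': "P i j * H j j + T i j * H j j + H i i * Q j i = D i j" for i j
    using fun_cong[OF fun_cong[OF E, of i], of j] H(1)
    by (simp add: madd_def mmult_diagonal_left mmult_diagonal_right mtrans_def)
  have P0: "P i j = 0" and Q0: "Q i j = 0" if "i \<le> j" for i j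
    using P Q that by (auto simp: strictly_lower_def)
  have D0: "D i j = 0" if "i \<noteq> j" for i j
    using D that by (auto simp: diagonal_def)
  show "P = mneg (lowpart T)"
  proof (intro ext)
    fix i j :: nat
    show "P i j = mneg (lowpart T) i j"
    proof (cases "j < i")
      case True
      then have "(P i j + T i j) * H j j = 0"
        using E'[of i j] Q0[of j i] D0[of i j] by (simp add: algebra_simps)
      then show ?thesis
        using True H(2) by (simp add: mneg_def lowpart_def add_eq_0_iff2)
    qed (simp add: P0 mneg_def lowpart_def)
  qed
  show "madd (mmult (\<lambda>i j. if i = j then - D i i / (H i i)\<^sup>2 else 0) H) (mmult (mmult (ltinv H) Q) H)
      = mneg (mtrans (uppart T))"
  proof (intro ext)
    fix i j :: nat
    have "madd (mmult (\<lambda>i j. if i = j then - D i i / (H i i)\<^sup>2 else 0) H) (mmult (mmult (ltinv H) Q) H) i j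
        = (if i = j then - D i i / H i i else 0) + Q i j * H j j / H i i"
      using H fun_cong[OF fun_cong[OF ltinv_diagonal[OF H(1)], of i], of i]
    by (simp add: madd_def mmult_diagonal_left[OF diagonal_ltinv[OF H]] mmult_diagonal_right[OF H(1)]
        power2_eq_square divide_inverse)
    also have "\<dots> = mneg (mtrans (uppart T)) i j"
    proof (cases i j rule: linorder_cases)
      case less
      then show ?thesis
        by (simp add: Q0 mneg_def mtrans_def uppart_def)
    next
      case equal
      then show ?thesis
        using E'[of i i] P0[of i i] Q0[of i i] H(2) by (simp add: mneg_def mtrans_def uppart_def field_simps)
    next
      case greater
      then have "Q i j * H j j = - T j i * H i i"
        using E'[of j i] P0[of j i] D0[of j i] by (simp add: algebra_simps add_eq_0_iff2)
      then show ?thesis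
        using greater H(2) by (simp add: mneg_def mtrans_def uppart_def field_simps)
    qed
    finally show "madd (mmult (\<lambda>i j. if i = j then - D i i / (H i i)\<^sup>2 else 0) H)
        (mmult (mmult (ltinv H) Q) H) i j = mneg (mtrans (uppart T)) i j" .
  qed
qed

text \<open>For \<open>D = vth1, vth2\<close> this is the paper's \<open>\<mu>\<^sup>(\<^sup>1\<^sup>)\<close>, \<open>\<mu>\<^sup>(\<^sup>2\<^sup>)\<close>, and for \<open>D = vth\<close> it is \<open>\<mu>\<close>.\<close>

definition euler_mu :: "((real \<Rightarrow> real \<Rightarrow> rmat) \<Rightarrow> real \<Rightarrow> real \<Rightarrow> rmat)
    \<Rightarrow> (real \<Rightarrow> real \<Rightarrow> rmat) \<Rightarrow> (real \<Rightarrow> real \<Rightarrow> rmat) \<Rightarrow> real \<Rightarrow> real \<Rightarrow> rmat" where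
  "euler_mu D St H x y = madd (mmult (D (\<lambda>u v. ltinv (H u v)) x y) (H x y))
     (mmult (mmult (ltinv (H x y)) (mmult (D St x y) (ltinv (St x y)))) (H x y))"

lemma euler_mu_add:
  assumes H: "diagonal (H x y)" "\<forall>k. H x y k k \<noteq> 0"
    and St: "upper_banded (vth1 St x y)" "upper_banded (vth2 St x y)"
  shows "madd (euler_mu vth1 St H x y) (euler_mu vth2 St H x y) = euler_mu vth St H x y"
  unfolding euler_mu_def vth_def[of St] vth_def[of "\<lambda>u v. ltinv (H u v)"]
  using assms
  by (simp add: mmult_madd_left mmult_madd_left_lower_banded mmult_madd_right)
    (simp add: madd_def algebra_simps)

lemma phi_mu_eq_triangular_parts:
  assumes U: "open U" "(x, y) \<in> U"
    and GB: "\<forall>(u, v)\<in>U. gauss_borel (M u v) (S u v) (St u v) (H u v)"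
    and dM: "partially_differentiable M x y" and vM: "vth M x y = mmult Lam (M x y)"
  shows "mmult (vth S x y) (ltinv (S x y)) = mneg (lowpart (Tmat (S x y)))"
    "euler_mu vth St H x y = mneg (mtrans (uppart (Tmat (S x y))))"
proof -
  have GB0: "gauss_borel (M x y) (S x y) (St x y) (H x y)"
    using GB U(2) by auto
  have S: "\<forall>(u, v)\<in>U. lower_unitri (S u v)" and St: "\<forall>(u, v)\<in>U. lower_unitri (St u v)"
    and H: "\<forall>(u, v)\<in>U. diagonal (H u v) \<and> (\<forall>k. H u v k k \<noteq> 0)"
    using GB by (auto simp: gauss_borel_def)
  have "madd (madd (mmult (mmult (vth S x y) (ltinv (S x y))) (H x y)) (mmult (Tmat (S x y)) (H x y)))
      (mmult (H x y) (mtrans (mmult (vth St x y) (ltinv (St x y))))) = vth H x y"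
    using vth_gauss_borel[OF U GB dM] by (simp add: vM gauss_borel_Lam[OF GB0])
  moreover have "strictly_lower (mmult (vth S x y) (ltinv (S x y)))"
    "strictly_lower (mmult (vth St x y) (ltinv (St x y)))"
    using strictly_lower_vth(3)[OF U S] strictly_lower_vth(3)[OF U St] GB0
      lower_unitri_ltinv[of "S x y"] lower_unitri_ltinv[of "St x y"]
    by (auto intro!: strictly_lower_mmult simp: gauss_borel_def lower_unitri_def)
  moreover have "diagonal (H x y)" "\<forall>k. H x y k k \<noteq> 0" "diagonal (vth H x y)"
    using GB0 diagonal_vth[of U x y H] U H by (auto simp: gauss_borel_def)
  ultimately have "mmult (vth S x y) (ltinv (S x y)) = mneg (lowpart (Tmat (S x y)))"
    "madd (mmult (\<lambda>i j. if i = j then - vth H x y i i / (H x y i i)\<^sup>2 else 0) (H x y))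
      (mmult (mmult (ltinv (H x y)) (mmult (vth St x y) (ltinv (St x y)))) (H x y))
      = mneg (mtrans (uppart (Tmat (S x y))))"
    using euler_identity_triangular_parts by blast+
  then show "mmult (vth S x y) (ltinv (S x y)) = mneg (lowpart (Tmat (S x y)))"
    "euler_mu vth St H x y = mneg (mtrans (uppart (Tmat (S x y))))"
    unfolding euler_mu_def
    by (simp_all add: vth_ltinv_diagonal[OF U H gauss_borel_partially_differentiable(3)[OF U GB dM]])
qed

lemma mtrans_comm_lowpart:
  assumes P: "upper_banded P" and T: "upper_banded T" and PT: "comm P T = P"
  shows "mtrans (comm P (lowpart T)) = madd (mtrans P) (comm (mneg (mtrans (uppart T))) (mtrans P))"
proof -
  have "T = madd (lowpart T) (uppart T)"
    by (auto intro!: ext simp: madd_def lowpart_def uppart_def)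
  then have "P = madd (comm P (lowpart T)) (comm P (uppart T))"
    using P T PT comm_madd_right[of P "lowpart T" "uppart T"] by simp
  then have "comm P (lowpart T) = msub P (comm P (uppart T))"
    by (simp add: fun_eq_iff madd_def msub_def)
  then show ?thesis
    by (simp add: comm_mneg_left mtrans_comm[symmetric])
      (simp add: comm_def msub_def madd_def mtrans_def fun_eq_iff)
qed

theorem mainTheorem15:
  fixes N M1 M2 :: nat
    and c b1 b2 :: "nat \<Rightarrow> real"
    and U :: "(real \<times> real) set"
    and S St H :: "real \<Rightarrow> real \<Rightarrow> rmat"
  assumes c_ok: "\<forall>j<N. \<forall>k. pochhammer (c j) k \<noteq> 0"
    and U_open: "open U"
    and conv1: "\<forall>(x, y)\<in>U. \<forall>n. summable (\<lambda>k. real k ^ n * hweight M1 b1 N c x k)"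
    and conv2: "\<forall>(x, y)\<in>U. \<forall>n. summable (\<lambda>k. real k ^ n * hweight M2 b2 N c y k)"
    and minors: "\<forall>(x, y)\<in>U. \<forall>n. lead_minor (moment (hweight M1 b1 N c x) (hweight M2 b2 N c y)) n \<noteq> 0"
    and fact_S: "\<forall>(x, y)\<in>U. lower_unitri (S x y)"
    and fact_St: "\<forall>(x, y)\<in>U. lower_unitri (St x y)"
    and fact_H: "\<forall>(x, y)\<in>U. diagonal (H x y)"
    and GB: "\<forall>(x, y)\<in>U. moment (hweight M1 b1 N c x) (hweight M2 b2 N c y)
               = mmult (mmult (ltinv (S x y)) (H x y)) (mtrans (ltinv (St x y)))"
    and pt: "(x, y) \<in> U"
  shows
    "let PsiF = (\<lambda>u v. Psi c N (S u v));
         Ps = PsiF x y;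
         T = Tmat (S x y);
         Tm = lowpart T;
         Tp = uppart T;
         phi = mmult (vth S x y) (ltinv (S x y));
         Hinv = ltinv (H x y);
         phit1 = mmult (vth1 St x y) (ltinv (St x y));
         phit2 = mmult (vth2 St x y) (ltinv (St x y));
         mu1 = madd (mmult (vth1 (\<lambda>u v. ltinv (H u v)) x y) (H x y)) (mmult (mmult Hinv phit1) (H x y));
         mu2 = madd (mmult (vth2 (\<lambda>u v. ltinv (H u v)) x y) (H x y)) (mmult (mmult Hinv phit2) (H x y));
         mu = madd mu1 mu2
     in vth PsiF x y = comm phi Ps
      \<and> comm phi Ps = comm (mneg Tm) Ps
      \<and> comm (mneg Tm) Ps = comm Ps Tm
      \<and> vth (\<lambda>u v. mtrans (PsiF u v)) x y = madd (mtrans Ps) (comm mu (mtrans Ps))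
      \<and> madd (mtrans Ps) (comm mu (mtrans Ps)) = madd (mtrans Ps) (comm (mneg (mtrans Tp)) (mtrans Ps))"
proof -
  note Mom = vth_moment[OF U_open pt hweight_eq_power hweight_eq_power conv1 conv2]
  have GBU: "\<forall>(u, v)\<in>U. gauss_borel (moment (hweight M1 b1 N c u) (hweight M2 b2 N c v))
      (S u v) (St u v) (H u v)"
    using fact_S fact_St fact_H GB minors by (auto intro!: gauss_borelI)
  note phi_mu = phi_mu_eq_triangular_parts[OF U_open pt GBU Mom]
  have S0: "lower_unitri (S x y)" and H0: "diagonal (H x y)" "\<forall>k. H x y k k \<noteq> 0"
    using GBU pt by (auto simp: gauss_borel_def)
  have dPsi: "vth (\<lambda>u v. Psi c N (S u v)) x y
      = comm (mmult (vth S x y) (ltinv (S x y))) (Psi c N (S x y))"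
    using vth_Psi[OF U_open pt fact_S gauss_borel_partially_differentiable(1)[OF U_open pt GBU Mom(1)]] .
  have mu: "madd (euler_mu vth1 St H x y) (euler_mu vth2 St H x y) = mneg (mtrans (uppart (Tmat (S x y))))"
    using euler_mu_add[of H x y St] H0 strictly_lower_vth(1,2)[OF U_open pt fact_St] phi_mu(2) by simp
  have "mtrans (comm (Psi c N (S x y)) (lowpart (Tmat (S x y))))
      = madd (mtrans (Psi c N (S x y))) (comm (mneg (mtrans (uppart (Tmat (S x y))))) (mtrans (Psi c N (S x y))))"
    using S0 by (intro mtrans_comm_lowpart) (simp_all add: comm_Psi_Tmat)
  then show ?thesis
    unfolding Let_def mu[unfolded euler_mu_def] vth_mtrans dPsi phi_mu(1) comm_mneg_left
    by simp
qed

end
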